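(* Let $\mathcal{H}$ be a nonzero reproducing kernel Hilbert space of $\mathfrak{X}$-valued entire functions with $B(\mathfrak{X})$-valued reproducing kernel $K_\gamma(z)$. Then for any $\beta\in\mathbb{C}$, $$R_\beta\mathcal{H}_\beta\subseteq\mathcal{H}\quad\text{if and only if}\quad R_\beta\mathcal{H}_\beta=\mathcal{D}.$$ Moreover, if this condition holds for some $\beta\in\mathbb{C}$, then: (1) $R_\beta$ is a bounded linear operator from $\mathcal{H}_\beta$ to $\mathcal{H}$; (2) $\operatorname{rng}(\mathfrak{T}-\beta I)=\mathcal{H}_\beta$; (3) $\beta$ is a point of regular type for $\mathfrak{T}$.
   Context: $\mathfrak{X}$ is a complex separable Hilbert space. For $\beta\in\mathbb{C}$, $\mathcal{H}_\beta=\{f\in\mathcal{H}: f(\beta)=0\}$. The generalized backward shift $R_\beta$ acts on $f$ with $f(\beta)=0$ by $(R_\beta f)(z)=\frac{f(z)}{z-\beta}$ for $z\neq\beta$ and $(R_\beta f)(\beta)=f'(\beta)$. The multiplication operator $\mathfrak{T}$ has domain $\mathcal{D}=\{f\in\mathcal{H}: zf(z)\in\mathcal{H}\}$ and $(\mathfrak{T}f)(z)=zf(z)$. A number $\gamma$ is a point of regular type of $\mathfrak{T}$ if there is $C_\gamma>0$ with $\|(\mathfrak{T}-\gamma I)f\|\ge C_\gamma\|f\|$ for all $f\in\mathcal{D}$. *)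

theory Defs
  imports "HOL-Analysis.Analysis"
begin

text \<open>The distribution has no complex inner product
spaces, so a complex Hilbert space is encoded as a real Hilbert space together
with a real-linear isometric complex structure cJ (multiplication by i),
cJ (cJ x) = - x. Complex scalar multiplication and the complex inner product
(linear in the first argument) are derived from it.\<close>

class complex_hilbert = real_inner + complete_space +
  fixes cJ :: "'a \<Rightarrow> 'a"
  assumes cJ_add: "cJ (x + y) = cJ x + cJ y"
    and cJ_scaleR: "cJ (r *\<^sub>R x) = r *\<^sub>R cJ x"
    and cJ_cJ: "cJ (cJ x) = - x"
    and cJ_inner: "inner (cJ x) (cJ y) = inner x y"

definition cscale :: "complex \<Rightarrow> 'a::complex_hilbert \<Rightarrow> 'a" where
  "cscale c x = Re c *\<^sub>R x + Im c *\<^sub>R cJ x"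

definition cinner :: "'a::complex_hilbert \<Rightarrow> 'a \<Rightarrow> complex" where
  "cinner x y = Complex (inner x y) (inner x (cJ y))"

definition cbounded_linear :: "('a::complex_hilbert \<Rightarrow> 'b::complex_hilbert) \<Rightarrow> bool" where
  "cbounded_linear T \<longleftrightarrow> bounded_linear T \<and> (\<forall>x. T (cJ x) = cJ (T x))"

definition has_cderiv :: "(complex \<Rightarrow> 'a::complex_hilbert) \<Rightarrow> 'a \<Rightarrow> complex \<Rightarrow> bool" where
  "has_cderiv f v z \<longleftrightarrow> (f has_derivative (\<lambda>h. cscale h v)) (at z)"

definition centire :: "(complex \<Rightarrow> 'a::complex_hilbert) \<Rightarrow> bool" where
  "centire f \<longleftrightarrow> (\<forall>z. \<exists>v. has_cderiv f v z)"

definition cderiv :: "(complex \<Rightarrow> 'a::complex_hilbert) \<Rightarrow> complex \<Rightarrow> 'a" where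
  "cderiv f z = (SOME v. has_cderiv f v z)"

text \<open>The Hilbert space is a type 'h, identified with the function space
range E via the injective complex-linear map E; K \<gamma> z is K_\<gamma>(z) \<in> B(X).\<close>
definition rkhs :: "('h::complex_hilbert \<Rightarrow> complex \<Rightarrow> 'x::complex_hilbert)
    \<Rightarrow> (complex \<Rightarrow> complex \<Rightarrow> 'x \<Rightarrow> 'x) \<Rightarrow> bool" where
  "rkhs E K \<longleftrightarrow>
     inj E \<and>
     (\<forall>a b. E (a + b) = (\<lambda>z. E a z + E b z)) \<and>
     (\<forall>r a. E (r *\<^sub>R a) = (\<lambda>z. r *\<^sub>R E a z)) \<and>
     (\<forall>a. E (cJ a) = (\<lambda>z. cJ (E a z))) \<and>
     (\<forall>a. centire (E a)) \<and>
     (\<forall>\<gamma> z. cbounded_linear (K \<gamma> z)) \<and>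
     (\<forall>\<gamma> u. \<exists>k. E k = (\<lambda>z. K \<gamma> z u) \<and> (\<forall>h. cinner h k = cinner (E h \<gamma>) u))"

text \<open>The space H (as a set of functions), its norm, H_\<beta>, R_\<beta>, the domain D of
the multiplication operator T and T itself.\<close>
definition Hsp :: "('h \<Rightarrow> complex \<Rightarrow> 'x) \<Rightarrow> (complex \<Rightarrow> 'x) set" where
  "Hsp E = range E"

definition normH :: "('h::complex_hilbert \<Rightarrow> complex \<Rightarrow> 'x) \<Rightarrow> (complex \<Rightarrow> 'x) \<Rightarrow> real" where
  "normH E f = norm (inv E f)"

definition Hzero :: "('h \<Rightarrow> complex \<Rightarrow> 'x::zero) \<Rightarrow> complex \<Rightarrow> (complex \<Rightarrow> 'x) set" where
  "Hzero E \<beta> = {f \<in> Hsp E. f \<beta> = 0}"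

definition Rshift :: "complex \<Rightarrow> (complex \<Rightarrow> 'x::complex_hilbert) \<Rightarrow> complex \<Rightarrow> 'x" where
  "Rshift \<beta> f z = (if z = \<beta> then cderiv f \<beta> else cscale (1 / (z - \<beta>)) (f z))"

definition Tmul :: "(complex \<Rightarrow> 'x::complex_hilbert) \<Rightarrow> complex \<Rightarrow> 'x" where
  "Tmul f z = cscale z (f z)"

definition Tdom :: "('h \<Rightarrow> complex \<Rightarrow> 'x::complex_hilbert) \<Rightarrow> (complex \<Rightarrow> 'x) set" where
  "Tdom E = {f \<in> Hsp E. Tmul f \<in> Hsp E}"

definition Tshift :: "complex \<Rightarrow> (complex \<Rightarrow> 'x::complex_hilbert) \<Rightarrow> complex \<Rightarrow> 'x" where
  "Tshift \<gamma> f z = Tmul f z - cscale \<gamma> (f z)"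

definition regular_type :: "('h::complex_hilbert \<Rightarrow> complex \<Rightarrow> 'x::complex_hilbert) \<Rightarrow> complex \<Rightarrow> bool" where
  "regular_type E \<gamma> \<longleftrightarrow> (\<exists>C>0. \<forall>f\<in>Tdom E. normH E (Tshift \<gamma> f) \<ge> C * normH E f)"

definition Rshift_bounded_linear :: "('h::complex_hilbert \<Rightarrow> complex \<Rightarrow> 'x::complex_hilbert) \<Rightarrow> complex \<Rightarrow> bool" where
  "Rshift_bounded_linear E \<beta> \<longleftrightarrow>
     Rshift \<beta> ` Hzero E \<beta> \<subseteq> Hsp E \<and>
     (\<forall>f\<in>Hzero E \<beta>. \<forall>g\<in>Hzero E \<beta>. \<forall>c.
        Rshift \<beta> (\<lambda>z. f z + g z) = (\<lambda>z. Rshift \<beta> f z + Rshift \<beta> g z) \<and>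
        Rshift \<beta> (\<lambda>z. cscale c (f z)) = (\<lambda>z. cscale c (Rshift \<beta> f z))) \<and>
     (\<exists>C. \<forall>f\<in>Hzero E \<beta>. normH E (Rshift \<beta> f) \<le> C * normH E f)"

end

theory Submission
  imports Defs
begin

text \<open>For entire g the shift R_\<beta> undoes multiplication by z - \<beta>, and z - \<beta> undoes
R_\<beta> on functions vanishing at \<beta>; so R_\<beta> and T - \<beta> are mutually inverse
between H_\<beta> and D as soon as R_\<beta> maps H_\<beta> into H, which gives the two range
identities. Boundedness of R_\<beta> is the closed graph theorem: H_\<beta> is closed and
the graph of R_\<beta> is the transposed graph of T - \<beta>, and both are closed because
point evaluations are weakly continuous in a reproducing kernel Hilbert space.
The bound for the inverse R_\<beta> is a lower bound for T - \<beta>, i.e. \<beta> is of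
regular type.\<close>

section \<open>The closed graph theorem\<close>

lemma Baire_sublevel_set_dense_in_ball:
  fixes Z :: "'a::{metric_space,complete_space} set" and f :: "'a \<Rightarrow> real"
  assumes "closed Z" and "Z \<noteq> {}"
  obtains x0 r and n :: nat
  where "x0 \<in> Z" "r > 0" "\<And>y. y \<in> Z \<Longrightarrow> dist y x0 < r \<Longrightarrow> y \<in> closure {x\<in>Z. f x \<le> real n}"
proof -
  define S where "S n = closure {x\<in>Z. f x \<le> real n}" for n :: nat
  define X where "X = top_of_set Z"
  have S_sub: "S n \<subseteq> Z" for n
    using \<open>closed Z\<close> closure_minimal[of _ Z] by (auto simp: S_def)
  have "(\<Union>n. S n) = Z"
  proof
    show "Z \<subseteq> (\<Union>n. S n)"
    proof
      fix x assume "x \<in> Z"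
      obtain n :: nat where "f x \<le> real n" using real_arch_simple by blast
      then show "x \<in> (\<Union>n. S n)" using \<open>x \<in> Z\<close> closure_subset by (fastforce simp: S_def)
    qed
  qed (use S_sub in blast)
  have "\<exists>n. X interior_of S n \<noteq> {}"
  proof (rule ccontr)
    assume "\<not> ?thesis"
    then have "X interior_of (\<Union>n. S n) = {}"
      by (intro Baire_category_alt)
        (auto simp: X_def S_def \<open>closed Z\<close> completely_metrizable_space_closedin
          completely_metrizable_space_euclidean closed_subset S_sub[unfolded S_def])
    moreover have "X interior_of Z = Z"
      unfolding X_def by (metis interior_of_topspace topspace_euclidean_subtopology)
    ultimately show False using \<open>(\<Union>n. S n) = Z\<close> \<open>Z \<noteq> {}\<close> by simp
  qed
  then obtain n x0 U where "openin X U" "x0 \<in> U" "U \<subseteq> S n"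
    unfolding interior_of_def by blast
  then obtain r where "r > 0" "\<And>y. y \<in> Z \<Longrightarrow> dist y x0 < r \<Longrightarrow> y \<in> U" "x0 \<in> Z"
    unfolding X_def openin_euclidean_subtopology_iff by blast
  then show thesis using that[of x0 r n] \<open>U \<subseteq> S n\<close> by (auto simp: S_def)
qed

lemma dense_sublevel_set_near_origin:
  fixes T :: "'a::real_normed_vector \<Rightarrow> 'b::real_normed_vector"
  assumes Z: "subspace Z"
    and add: "\<And>x y. x \<in> Z \<Longrightarrow> y \<in> Z \<Longrightarrow> T (x + y) = T x + T y"
    and scale: "\<And>c x. x \<in> Z \<Longrightarrow> T (c *\<^sub>R x) = c *\<^sub>R T x"
    and "x0 \<in> Z" "r > 0"
    and dense: "\<And>y. y \<in> Z \<Longrightarrow> dist y x0 < r \<Longrightarrow> y \<in> closure {x\<in>Z. norm (T x) \<le> b}"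
    and "y \<in> Z" "norm y < r" "e > 0"
  shows "\<exists>s\<in>Z. dist s y < e \<and> norm (T s) \<le> 2 * b"
proof -
  have near: "\<exists>s\<in>Z. norm (T s) \<le> b \<and> dist s p < e / 2"
    if p: "p \<in> Z" "dist p x0 < r" for p
  proof -
    obtain s where "s \<in> {x\<in>Z. norm (T x) \<le> b}" "dist s p < e / 2"
      using dense[OF p] \<open>e > 0\<close> unfolding closure_approachable by (meson half_gt_zero)
    then show ?thesis by blast
  qed
  obtain s1 where s1: "s1 \<in> Z" "norm (T s1) \<le> b" "dist s1 (x0 + y) < e / 2"
    using near[of "x0 + y"] subspace_add[OF Z \<open>x0 \<in> Z\<close> \<open>y \<in> Z\<close>] \<open>norm y < r\<close>
    by (auto simp: dist_norm)
  obtain s2 where s2: "s2 \<in> Z" "norm (T s2) \<le> b" "dist s2 x0 < e / 2"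
    using near[of x0] \<open>x0 \<in> Z\<close> \<open>r > 0\<close> by auto
  have "dist (s1 - s2) y = norm ((s1 - (x0 + y)) - (s2 - x0))"
    by (simp add: dist_norm algebra_simps)
  also have "\<dots> \<le> dist s1 (x0 + y) + dist s2 x0"
    unfolding dist_norm by (rule norm_triangle_ineq4)
  finally have "dist (s1 - s2) y < e"
    using s1(3) s2(3) by simp
  moreover have "T (s1 - s2) = T s1 - T s2"
    using add[OF s1(1) subspace_scale[OF Z s2(1), of "-1"]] scale[OF s2(1), of "-1"] by simp
  then have "norm (T (s1 - s2)) \<le> 2 * b"
    using norm_triangle_ineq4[of "T s1" "T s2"] s1(2) s2(2) by simp
  ultimately show ?thesis
    using subspace_diff[OF Z s1(1) s2(1)] by blast
qed

lemma approximation_by_scaling: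
  fixes T :: "'a::real_normed_vector \<Rightarrow> 'b::real_normed_vector"
  assumes Z: "subspace Z"
    and scale: "\<And>c x. x \<in> Z \<Longrightarrow> T (c *\<^sub>R x) = c *\<^sub>R T x"
    and "r > 0" "B \<ge> 0"
    and near: "\<And>y e. y \<in> Z \<Longrightarrow> norm y < r \<Longrightarrow> e > 0 \<Longrightarrow> \<exists>s\<in>Z. dist s y < e \<and> norm (T s) \<le> B"
  shows "\<exists>M\<ge>0. \<forall>y\<in>Z. \<exists>s\<in>Z. norm (y - s) \<le> norm y / 2 \<and> norm (T s) \<le> M * norm y"
proof -
  have "\<exists>s\<in>Z. norm (y - s) \<le> norm y / 2 \<and> norm (T s) \<le> (2 * B / r) * norm y"
    if "y \<in> Z" for y
  proof (cases "y = 0")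
    case True
    then show ?thesis using subspace_0[OF Z] scale[OF subspace_0[OF Z], of 0] by auto
  next
    case False
    define c where "c = r / (2 * norm y)"
    have "c > 0" using False \<open>r > 0\<close> by (simp add: c_def)
    have "norm (c *\<^sub>R y) < r" using False \<open>r > 0\<close> by (simp add: c_def)
    moreover have "c * (norm y / 2) > 0" using \<open>c > 0\<close> False by simp
    ultimately obtain s where s: "s \<in> Z" "dist s (c *\<^sub>R y) < c * (norm y / 2)" "norm (T s) \<le> B"
      using near subspace_scale[OF Z \<open>y \<in> Z\<close>] by blast
    have "norm (y - (1/c) *\<^sub>R s) = (1/c) * dist s (c *\<^sub>R y)"
    proof -
      have "y - (1/c) *\<^sub>R s = (1/c) *\<^sub>R (c *\<^sub>R y - s)" using \<open>c > 0\<close> by (simp add: algebra_simps)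
      then show ?thesis using \<open>c > 0\<close> by (simp add: dist_norm norm_minus_commute)
    qed
    also have "\<dots> \<le> norm y / 2" using s(2) \<open>c > 0\<close> by (simp add: field_simps)
    finally have "norm (y - (1/c) *\<^sub>R s) \<le> norm y / 2" .
    moreover have "norm (T ((1/c) *\<^sub>R s)) \<le> (2 * B / r) * norm y"
    proof -
      have "norm (T ((1/c) *\<^sub>R s)) = (1/c) * norm (T s)" using scale[OF s(1)] \<open>c > 0\<close> by simp
      also have "\<dots> \<le> (1/c) * B" using s(3) \<open>c > 0\<close> by (simp add: divide_right_mono)
      also have "\<dots> = (2 * B / r) * norm y" using False \<open>r > 0\<close> by (simp add: c_def field_simps)
      finally show ?thesis .
    qed
    ultimately show ?thesis using subspace_scale[OF Z s(1)] by blast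
  qed
  moreover have "2 * B / r \<ge> 0" using \<open>B \<ge> 0\<close> \<open>r > 0\<close> by simp
  ultimately show ?thesis by blast
qed

lemma bounded_by_successive_approximation:
  fixes T :: "'a::real_normed_vector \<Rightarrow> 'b::banach"
  assumes Z: "subspace Z"
    and add: "\<And>x y. x \<in> Z \<Longrightarrow> y \<in> Z \<Longrightarrow> T (x + y) = T x + T y"
    and scale: "\<And>c x. x \<in> Z \<Longrightarrow> T (c *\<^sub>R x) = c *\<^sub>R T x"
    and graph: "closed ((\<lambda>x. (x, T x)) ` Z)"
    and "M \<ge> 0"
    and approx: "\<And>y. y \<in> Z \<Longrightarrow> \<exists>s\<in>Z. norm (y - s) \<le> norm y / 2 \<and> norm (T s) \<le> M * norm y"
    and "x \<in> Z"
  shows "norm (T x) \<le> 2 * M * norm x"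
proof -
  obtain f where f: "\<And>y. y \<in> Z \<Longrightarrow> f y \<in> Z \<and> norm (y - f y) \<le> norm y / 2 \<and> norm (T (f y)) \<le> M * norm y"
    using approx by metis
  define rest where "rest k = ((\<lambda>y. y - f y) ^^ k) x" for k
  define s where "s k = f (rest k)" for k
  have rest_0: "rest 0 = x" and rest_Suc: "rest (Suc k) = rest k - s k" for k
    by (simp_all add: rest_def s_def)
  have rest: "rest k \<in> Z \<and> norm (rest k) \<le> norm x / 2 ^ k" for k
  proof (induction k)
    case 0
    then show ?case using \<open>x \<in> Z\<close> by (simp add: rest_0)
  next
    case (Suc k)
    then have "s k \<in> Z" "norm (rest (Suc k)) \<le> (norm x / 2 ^ k) / 2"
      using f[of "rest k"] by (auto simp: rest_Suc s_def)
    then show ?case using Suc subspace_diff[OF Z] by (simp add: rest_Suc)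
  qed
  have s_Z: "s k \<in> Z" for k
    using f[OF rest[THEN conjunct1]] by (simp add: s_def)
  have T_s: "norm (T (s k)) \<le> M * norm x * (1/2) ^ k" for k
  proof -
    have "norm (T (s k)) \<le> M * norm (rest k)"
      using f[OF rest[THEN conjunct1]] by (simp add: s_def)
    also have "\<dots> \<le> M * (norm x / 2 ^ k)" using rest \<open>M \<ge> 0\<close> by (intro mult_left_mono) auto
    finally show ?thesis by (simp add: power_divide)
  qed
  have sum_Z: "(\<Sum>i<m. s i) \<in> Z" for m
    by (rule subspace_sum[OF Z s_Z])
  have partial_sums: "(\<Sum>i<m. s i) = x - rest m" for m
    by (induction m) (simp_all add: rest_0 rest_Suc)
  have T_sum: "T (\<Sum>i<m. s i) = (\<Sum>i<m. T (s i))" for m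
  proof (induction m)
    case 0
    then show ?case using scale[OF subspace_0[OF Z], of 0] by simp
  next
    case (Suc m)
    then show ?case using add[OF sum_Z s_Z] by simp
  qed
  have "rest \<longlonglongrightarrow> 0"
  proof (rule tendsto_norm_zero_cancel, rule Lim_null_comparison)
    show "\<forall>\<^sub>F m in sequentially. norm (norm (rest m)) \<le> norm x * (1/2) ^ m"
      using rest by (simp add: power_divide)
    show "(\<lambda>m. norm x * (1/2) ^ m) \<longlonglongrightarrow> 0"
      by (intro tendsto_mult_right_zero LIMSEQ_power_zero) auto
  qed
  then have "(\<lambda>m. \<Sum>i<m. s i) \<longlonglongrightarrow> x"
    unfolding partial_sums using tendsto_diff[OF tendsto_const[of x]] by fastforce
  have geometric: "summable (\<lambda>k. M * norm x * (1/2::real) ^ k)"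
    by (intro summable_mult summable_geometric) auto
  have "summable (\<lambda>k. T (s k))"
    using T_s by (intro summable_comparison_test[OF _ geometric]) simp
  then have "(\<lambda>m. T (\<Sum>i<m. s i)) \<longlonglongrightarrow> (\<Sum>k. T (s k))"
    unfolding T_sum by (rule summable_LIMSEQ)
  with \<open>(\<lambda>m. \<Sum>i<m. s i) \<longlonglongrightarrow> x\<close>
  have graph_points: "(\<lambda>m. ((\<Sum>i<m. s i), T (\<Sum>i<m. s i))) \<longlonglongrightarrow> (x, \<Sum>k. T (s k))"
    by (rule tendsto_Pair)
  have "(x, \<Sum>k. T (s k)) \<in> (\<lambda>x. (x, T x)) ` Z"
    by (rule closed_sequentially[OF graph _ graph_points]) (use sum_Z in blast)
  then have "T x = (\<Sum>k. T (s k))" by (auto simp: image_iff)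
  also have "norm \<dots> \<le> (\<Sum>k. M * norm x * (1/2::real) ^ k)"
    by (rule norm_suminf_le[OF T_s geometric])
  also have "\<dots> = 2 * M * norm x"
    by (simp add: suminf_mult suminf_geometric)
  finally show ?thesis .
qed

theorem closed_graph_theorem:
  fixes T :: "'a::banach \<Rightarrow> 'b::banach"
  assumes "closed Z" and "subspace Z"
    and add: "\<And>x y. x \<in> Z \<Longrightarrow> y \<in> Z \<Longrightarrow> T (x + y) = T x + T y"
    and scale: "\<And>c x. x \<in> Z \<Longrightarrow> T (c *\<^sub>R x) = c *\<^sub>R T x"
    and "closed ((\<lambda>x. (x, T x)) ` Z)"
  shows "\<exists>C. \<forall>x\<in>Z. norm (T x) \<le> C * norm x"
proof -
  have "Z \<noteq> {}" using subspace_0[OF \<open>subspace Z\<close>] by blast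
  then obtain x0 r and n :: nat where "x0 \<in> Z" "r > 0"
    and dense: "\<And>y. y \<in> Z \<Longrightarrow> dist y x0 < r \<Longrightarrow> y \<in> closure {x\<in>Z. norm (T x) \<le> real n}"
    by (rule Baire_sublevel_set_dense_in_ball[OF \<open>closed Z\<close>, where f = "\<lambda>x. norm (T x)"]) blast
  have "\<exists>s\<in>Z. dist s y < e \<and> norm (T s) \<le> 2 * real n"
    if "y \<in> Z" "norm y < r" "e > 0" for y e
    by (rule dense_sublevel_set_near_origin[OF \<open>subspace Z\<close> add scale \<open>x0 \<in> Z\<close> \<open>r > 0\<close> dense that])
  then obtain M where "M \<ge> 0"
    and approx: "\<forall>y\<in>Z. \<exists>s\<in>Z. norm (y - s) \<le> norm y / 2 \<and> norm (T s) \<le> M * norm y"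
    using approximation_by_scaling[OF \<open>subspace Z\<close> scale \<open>r > 0\<close>, of "2 * real n"] by auto
  show ?thesis
    using bounded_by_successive_approximation[OF \<open>subspace Z\<close> add scale \<open>closed (_ ` Z)\<close>
        \<open>M \<ge> 0\<close> approx[rule_format]] by blast
qed

context complex_hilbert begin
subclass banach ..
end

lemma inner_cJ_left: "inner (cJ x) (y::'a::complex_hilbert) = - inner x (cJ y)"
  by (metis cJ_cJ cJ_inner inner_minus_left)

lemma norm_cJ: "norm (cJ x) = norm (x::'a::complex_hilbert)"
  by (simp add: norm_eq_sqrt_inner cJ_inner)

lemma cscale_add_right: "cscale c (x + y) = cscale c x + cscale c (y::'a::complex_hilbert)"
  by (simp add: cscale_def cJ_add algebra_simps)

lemma cscale_add_left: "cscale (c + d) x = cscale c x + cscale d (x::'a::complex_hilbert)"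
  by (simp add: cscale_def algebra_simps)

lemma cscale_diff_left: "cscale (c - d) x = cscale c x - cscale d (x::'a::complex_hilbert)"
  by (simp add: cscale_def algebra_simps)

lemma cscale_minus_left: "cscale (- c) x = - cscale c (x::'a::complex_hilbert)"
  by (simp add: cscale_def)

lemma cscale_scaleR: "cscale c (r *\<^sub>R x) = r *\<^sub>R cscale c (x::'a::complex_hilbert)"
  by (simp add: cscale_def cJ_scaleR algebra_simps)

lemma cscale_mult: "cscale (c * d) x = cscale c (cscale d (x::'a::complex_hilbert))"
  by (simp add: cscale_def cJ_add cJ_scaleR cJ_cJ algebra_simps)

lemma cscale_commute: "cscale c (cscale d x) = cscale d (cscale c (x::'a::complex_hilbert))"
  by (metis cscale_mult mult.commute)

lemma cscale_one [simp]: "cscale 1 x = (x::'a::complex_hilbert)"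
  by (simp add: cscale_def)

lemma cscale_zero_left [simp]: "cscale 0 x = (0::'a::complex_hilbert)"
  by (simp add: cscale_def)

lemma cscale_of_real: "cscale (complex_of_real r) x = r *\<^sub>R (x::'a::complex_hilbert)"
  by (simp add: cscale_def)

lemma inner_cscale_left: "inner (cscale c x) y = inner x (cscale (cnj c) (y::'a::complex_hilbert))"
  by (simp add: cscale_def inner_add_left inner_add_right inner_cJ_left inner_diff_right)

lemma bounded_bilinear_cscale: "bounded_bilinear (cscale :: complex \<Rightarrow> 'a::complex_hilbert \<Rightarrow> 'a)"
proof
  fix a a' :: complex and b b' :: 'a and r :: real
  show "cscale (a + a') b = cscale a b + cscale a' b" by (rule cscale_add_left)
  show "cscale a (b + b') = cscale a b + cscale a b'" by (rule cscale_add_right)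
  show "cscale (r *\<^sub>R a) b = r *\<^sub>R cscale a b" by (simp add: cscale_def scaleR_conv_of_real algebra_simps)
  show "cscale a (r *\<^sub>R b) = r *\<^sub>R cscale a b" by (rule cscale_scaleR)
next
  have "norm (cscale a b) \<le> norm a * norm b * 2" for a :: complex and b :: 'a
  proof -
    have "norm (cscale a b) \<le> \<bar>Re a\<bar> * norm b + \<bar>Im a\<bar> * norm b"
      unfolding cscale_def using norm_triangle_ineq[of "Re a *\<^sub>R b" "Im a *\<^sub>R cJ b"]
      by (simp add: norm_cJ)
    also have "\<dots> \<le> norm a * norm b + norm a * norm b"
      by (intro add_mono mult_right_mono abs_Re_le_cmod abs_Im_le_cmod) auto
    finally show ?thesis by (simp add: algebra_simps)
  qed
  then show "\<exists>K. \<forall>(a::complex) (b::'a). norm (cscale a b) \<le> norm a * norm b * K" by blast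
qed

section \<open>Complex derivatives and the operators R_\<beta> and T - \<beta>\<close>

lemma has_cderiv_unique: "has_cderiv f v z \<Longrightarrow> has_cderiv f w z \<Longrightarrow> v = w"
  unfolding has_cderiv_def by (metis cscale_one has_derivative_unique)

lemma cderiv_eqI: "has_cderiv f v z \<Longrightarrow> cderiv f z = v"
  unfolding cderiv_def using has_cderiv_unique by (metis someI_ex)

lemma centire_has_cderiv: "centire f \<Longrightarrow> has_cderiv f (cderiv f z) z"
  unfolding centire_def cderiv_def by (metis someI_ex)

lemma has_cderiv_add:
  "has_cderiv f v z \<Longrightarrow> has_cderiv g w z \<Longrightarrow> has_cderiv (\<lambda>z. f z + g z) (v + w) z"
  unfolding has_cderiv_def by (drule (1) has_derivative_add) (simp add: cscale_add_right)

lemma has_cderiv_cscale: "has_cderiv f v z \<Longrightarrow> has_cderiv (\<lambda>z. cscale c (f z)) (cscale c v) z"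
  unfolding has_cderiv_def
  by (drule bounded_linear.has_derivative[OF bounded_bilinear.bounded_linear_right[OF bounded_bilinear_cscale]])
    (simp add: cscale_commute)

lemma has_cderiv_cscale_shift:
  assumes "has_cderiv g w \<beta>"
  shows "has_cderiv (\<lambda>z. cscale (z - \<beta>) (g z)) (g \<beta>) \<beta>"
proof -
  have "((\<lambda>z. z - \<beta>) has_derivative (\<lambda>h. h)) (at \<beta>)"
    by (intro derivative_eq_intros) auto
  from bounded_bilinear.FDERIV[OF bounded_bilinear_cscale this assms[unfolded has_cderiv_def]]
  show ?thesis by (simp add: has_cderiv_def)
qed

lemma Rshift_add:
  "centire f \<Longrightarrow> centire g \<Longrightarrow> Rshift \<beta> (\<lambda>z. f z + g z) = (\<lambda>z. Rshift \<beta> f z + Rshift \<beta> g z)"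
  by (auto simp: Rshift_def cscale_add_right
      cderiv_eqI[OF has_cderiv_add[OF centire_has_cderiv centire_has_cderiv]])

lemma Rshift_cscale:
  "centire f \<Longrightarrow> Rshift \<beta> (\<lambda>z. cscale c (f z)) = (\<lambda>z. cscale c (Rshift \<beta> f z))"
  by (auto simp: Rshift_def cscale_commute cderiv_eqI[OF has_cderiv_cscale[OF centire_has_cderiv]])

lemma Tshift_eq: "Tshift \<beta> g = (\<lambda>z. cscale (z - \<beta>) (g z))"
  by (simp add: Tshift_def Tmul_def cscale_diff_left fun_eq_iff)

lemma Rshift_Tshift:
  assumes "centire g"
  shows "Rshift \<beta> (Tshift \<beta> g) = g"
proof
  fix z
  show "Rshift \<beta> (Tshift \<beta> g) z = g z"
  proof (cases "z = \<beta>")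
    case True
    then show ?thesis
      using cderiv_eqI[OF has_cderiv_cscale_shift[OF centire_has_cderiv[OF assms]]]
      by (simp add: Rshift_def Tshift_eq)
  next
    case False
    then show ?thesis by (simp add: Rshift_def Tshift_eq cscale_mult[symmetric])
  qed
qed

lemma Tshift_Rshift:
  assumes "f \<beta> = 0"
  shows "Tshift \<beta> (Rshift \<beta> f) = f"
  using assms by (auto simp: Tshift_eq Rshift_def cscale_mult[symmetric])

lemma Tshift_eq_iff:
  assumes "centire g"
  shows "Tshift \<beta> g = f \<longleftrightarrow> f \<beta> = 0 \<and> Rshift \<beta> f = g"
  using Rshift_Tshift[OF assms] Tshift_Rshift[of f \<beta>] by (auto simp: Tshift_eq)

section \<open>Reproducing kernel Hilbert spaces\<close>

lemma rkhs_inj: "rkhs E K \<Longrightarrow> inj E"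
  by (simp add: rkhs_def)

lemma rkhs_add: "rkhs E K \<Longrightarrow> E (a + b) = (\<lambda>z. E a z + E b z)"
  by (simp add: rkhs_def)

lemma rkhs_scaleR: "rkhs E K \<Longrightarrow> E (r *\<^sub>R a) = (\<lambda>z. r *\<^sub>R E a z)"
  by (simp add: rkhs_def)

lemma rkhs_cscale: "rkhs E K \<Longrightarrow> E (cscale c a) = (\<lambda>z. cscale c (E a z))"
  by (simp add: rkhs_def cscale_def)

lemma rkhs_zero: "rkhs E K \<Longrightarrow> E 0 = (\<lambda>z. 0)"
  using rkhs_scaleR[of E K 0 0] by simp

lemma rkhs_centire: "rkhs E K \<Longrightarrow> centire (E a)"
  by (simp add: rkhs_def)

lemma Hsp_add: "rkhs E K \<Longrightarrow> f \<in> Hsp E \<Longrightarrow> g \<in> Hsp E \<Longrightarrow> (\<lambda>z. f z + g z) \<in> Hsp E"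
  unfolding Hsp_def by (auto simp flip: rkhs_add)

lemma Hsp_cscale: "rkhs E K \<Longrightarrow> f \<in> Hsp E \<Longrightarrow> (\<lambda>z. cscale c (f z)) \<in> Hsp E"
  unfolding Hsp_def by (auto simp flip: rkhs_cscale)

lemma Hsp_centire: "rkhs E K \<Longrightarrow> f \<in> Hsp E \<Longrightarrow> centire f"
  unfolding Hsp_def using rkhs_centire by blast

lemma normH_eval: "rkhs E K \<Longrightarrow> normH E (E a) = norm a"
  by (simp add: normH_def rkhs_inj)

lemma rkhs_inner_eval_representer:
  assumes "rkhs E K"
  obtains k where "\<And>a. inner (E a \<gamma>) u = inner a k"
proof -
  obtain k where k: "\<And>a. cinner a k = cinner (E a \<gamma>) u"
    using assms unfolding rkhs_def by blast
  have "inner (E a \<gamma>) u = inner a k" for a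
    using k[of a] by (simp add: cinner_def)
  then show thesis by (rule that)
qed

lemma continuous_on_rkhs_inner_eval:
  assumes "rkhs E K" and "continuous_on S f"
  shows "continuous_on S (\<lambda>x. inner (E (f x) \<gamma>) u)"
proof -
  obtain k where "\<And>a. inner (E a \<gamma>) u = inner a k"
    using rkhs_inner_eval_representer[OF assms(1), where \<gamma> = \<gamma> and u = u] by blast
  then show ?thesis using assms(2) by (simp add: continuous_intros)
qed

lemma closed_rkhs_vanishing:
  assumes "rkhs E K"
  shows "closed {a. E a \<beta> = 0}"
proof -
  have "{a. E a \<beta> = 0} = (\<Inter>u. {a. inner (E a \<beta>) u = 0})"
    by (simp add: set_eq_iff)
  also have "closed \<dots>"
    by (intro closed_INT ballI closed_Collect_eq continuous_on_rkhs_inner_eval[OF assms]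
        continuous_on_id continuous_on_const)
  finally show ?thesis .
qed

lemma eq_iff_inner_eq: "x = y \<longleftrightarrow> (\<forall>u. inner x u = inner (y::'a::real_inner) u)"
proof -
  have "x = y \<longleftrightarrow> (\<forall>u. inner (x - y) u = 0)" by simp
  then show ?thesis by (simp add: inner_diff_left)
qed

lemma closed_rkhs_transposed_graph_Tshift:
  assumes "rkhs E K"
  shows "closed {(a, b). E a = Tshift \<beta> (E b)}"
proof -
  have "E a = Tshift \<beta> (E b) \<longleftrightarrow>
      (\<forall>\<gamma> u. inner (E a \<gamma>) u = inner (E b \<gamma>) (cscale (cnj (\<gamma> - \<beta>)) u))" for a b
    unfolding fun_eq_iff Tshift_eq inner_cscale_left[symmetric] eq_iff_inner_eq[where y = "cscale _ _"]
    by blast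
  then have "{(a, b). E a = Tshift \<beta> (E b)} =
      (\<Inter>\<gamma>. \<Inter>u. {p. inner (E (fst p) \<gamma>) u = inner (E (snd p) \<gamma>) (cscale (cnj (\<gamma> - \<beta>)) u)})"
    by auto
  also have "closed \<dots>"
    by (intro closed_INT ballI closed_Collect_eq continuous_on_rkhs_inner_eval[OF assms]
        continuous_on_fst continuous_on_snd continuous_on_id)
  finally show ?thesis .
qed

lemma Tdom_iff_Tshift:
  assumes rk: "rkhs E K"
  shows "g \<in> Tdom E \<longleftrightarrow> g \<in> Hsp E \<and> Tshift \<beta> g \<in> Hsp E"
proof (cases "g \<in> Hsp E")
  case True
  have "Tshift \<beta> g = (\<lambda>z. Tmul g z + cscale (- \<beta>) (g z))"
    and "Tmul g = (\<lambda>z. Tshift \<beta> g z + cscale \<beta> (g z))"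
    by (simp_all add: Tshift_def cscale_minus_left fun_eq_iff)
  then have "Tmul g \<in> Hsp E \<longleftrightarrow> Tshift \<beta> g \<in> Hsp E"
    using Hsp_add[OF rk _ Hsp_cscale[OF rk True]] by metis
  then show ?thesis by (simp add: Tdom_def True)
qed (simp add: Tdom_def)

lemma Tshift_Tdom:
  assumes rk: "rkhs E K" and "g \<in> Tdom E"
  shows "Tshift \<beta> g \<in> Hzero E \<beta>" and "Rshift \<beta> (Tshift \<beta> g) = g"
proof -
  have "g \<in> Hsp E" and "Tshift \<beta> g \<in> Hsp E"
    using Tdom_iff_Tshift[OF rk, of g \<beta>] \<open>g \<in> Tdom E\<close> by simp_all
  then show "Tshift \<beta> g \<in> Hzero E \<beta>" and "Rshift \<beta> (Tshift \<beta> g) = g"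
    using Rshift_Tshift[OF Hsp_centire[OF rk]] by (simp_all add: Hzero_def Tshift_eq)
qed

lemma Rshift_Hzero:
  assumes rk: "rkhs E K" and "f \<in> Hzero E \<beta>" and "Rshift \<beta> f \<in> Hsp E"
  shows "Rshift \<beta> f \<in> Tdom E" and "Tshift \<beta> (Rshift \<beta> f) = f"
proof -
  have "f \<in> Hsp E" and "f \<beta> = 0"
    using \<open>f \<in> Hzero E \<beta>\<close> by (simp_all add: Hzero_def)
  then show "Tshift \<beta> (Rshift \<beta> f) = f" and "Rshift \<beta> f \<in> Tdom E"
    using Tshift_Rshift[of f \<beta>] Tdom_iff_Tshift[OF rk, of "Rshift \<beta> f" \<beta>] \<open>Rshift \<beta> f \<in> Hsp E\<close>
    by simp_all
qed

lemma Tdom_subset_Rshift_image: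
  assumes rk: "rkhs E K"
  shows "Tdom E \<subseteq> Rshift \<beta> ` Hzero E \<beta>"
proof
  fix g assume "g \<in> Tdom E"
  then have "g = Rshift \<beta> (Tshift \<beta> g)" and "Tshift \<beta> g \<in> Hzero E \<beta>"
    using Tshift_Tdom[OF rk] by simp_all
  then show "g \<in> Rshift \<beta> ` Hzero E \<beta>" by (rule image_eqI)
qed

lemma Rshift_image_eq_Tdom:
  assumes rk: "rkhs E K" and into: "Rshift \<beta> ` Hzero E \<beta> \<subseteq> Hsp E"
  shows "Rshift \<beta> ` Hzero E \<beta> = Tdom E"
  using Rshift_Hzero(1)[OF rk] into Tdom_subset_Rshift_image[OF rk] by blast

lemma Tshift_image_Tdom:
  assumes rk: "rkhs E K" and into: "Rshift \<beta> ` Hzero E \<beta> \<subseteq> Hsp E"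
  shows "Tshift \<beta> ` Tdom E = Hzero E \<beta>"
proof
  show "Tshift \<beta> ` Tdom E \<subseteq> Hzero E \<beta>"
    using Tshift_Tdom(1)[OF rk] by blast
  show "Hzero E \<beta> \<subseteq> Tshift \<beta> ` Tdom E"
  proof
    fix f assume "f \<in> Hzero E \<beta>"
    then have "f = Tshift \<beta> (Rshift \<beta> f)" and "Rshift \<beta> f \<in> Tdom E"
      using Rshift_Hzero[OF rk] into by auto
    then show "f \<in> Tshift \<beta> ` Tdom E" by (rule image_eqI)
  qed
qed

context
  fixes E :: "'h::complex_hilbert \<Rightarrow> complex \<Rightarrow> 'x::complex_hilbert"
    and K :: "complex \<Rightarrow> complex \<Rightarrow> 'x \<Rightarrow> 'x" and \<beta> :: complex and R :: "'h \<Rightarrow> 'h"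
  assumes rk: "rkhs E K"
    and E_R: "\<And>a. E a \<beta> = 0 \<Longrightarrow> E (R a) = Rshift \<beta> (E a)"
begin

lemma Rshift_lift_add:
  assumes "E a \<beta> = 0" "E b \<beta> = 0"
  shows "R (a + b) = R a + R b"
proof -
  have "E (R (a + b)) = Rshift \<beta> (E (a + b))"
    using E_R[of "a + b"] assms by (simp add: rkhs_add[OF rk])
  also have "\<dots> = E (R a + R b)"
    by (simp add: rkhs_add[OF rk] Rshift_add rkhs_centire[OF rk] E_R assms)
  finally show ?thesis using rkhs_inj[OF rk] by (simp add: inj_eq)
qed

lemma Rshift_lift_scaleR:
  assumes "E a \<beta> = 0"
  shows "R (c *\<^sub>R a) = c *\<^sub>R R a"
proof -
  have "E (R (c *\<^sub>R a)) = Rshift \<beta> (E (c *\<^sub>R a))"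
    using E_R[of "c *\<^sub>R a"] assms by (simp add: rkhs_scaleR[OF rk])
  also have "\<dots> = (\<lambda>z. c *\<^sub>R Rshift \<beta> (E a) z)"
    using Rshift_cscale[OF rkhs_centire[OF rk, of a], where \<beta> = \<beta> and c = "of_real c"]
    by (simp add: rkhs_scaleR[OF rk] cscale_of_real)
  also have "\<dots> = E (c *\<^sub>R R a)"
    by (simp add: rkhs_scaleR[OF rk] E_R[OF assms])
  finally show ?thesis using rkhs_inj[OF rk] by (simp add: inj_eq)
qed

lemma Rshift_lift_graph: "(\<lambda>a. (a, R a)) ` {a. E a \<beta> = 0} = {(a, b). E a = Tshift \<beta> (E b)}"
proof -
  have "E a = Tshift \<beta> (E b) \<longleftrightarrow> E a \<beta> = 0 \<and> b = R a" for a b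
  proof -
    have "E a = Tshift \<beta> (E b) \<longleftrightarrow> E a \<beta> = 0 \<and> Rshift \<beta> (E a) = E b"
      using Tshift_eq_iff[OF rkhs_centire[OF rk], of \<beta> b "E a"] by auto
    also have "\<dots> \<longleftrightarrow> E a \<beta> = 0 \<and> E (R a) = E b"
      using E_R by auto
    also have "\<dots> \<longleftrightarrow> E a \<beta> = 0 \<and> b = R a"
      using inj_eq[OF rkhs_inj[OF rk]] by auto
    finally show ?thesis .
  qed
  then show ?thesis by auto
qed

end

lemma Rshift_bounded:
  assumes rk: "rkhs E K" and into: "Rshift \<beta> ` Hzero E \<beta> \<subseteq> Hsp E"
  shows "\<exists>C. \<forall>f\<in>Hzero E \<beta>. normH E (Rshift \<beta> f) \<le> C * normH E f"
proof -
  define Z where "Z = {a. E a \<beta> = 0}"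
  define R where "R a = inv E (Rshift \<beta> (E a))" for a
  have E_R: "E (R a) = Rshift \<beta> (E a)" if "E a \<beta> = 0" for a
  proof -
    have "Rshift \<beta> (E a) \<in> range E"
      using into that by (auto simp: Hzero_def Hsp_def)
    then show ?thesis by (simp add: R_def f_inv_into_f)
  qed
  have "subspace Z"
    by (simp add: subspace_def Z_def rkhs_zero[OF rk] rkhs_add[OF rk] rkhs_scaleR[OF rk])
  moreover have "closed ((\<lambda>a. (a, R a)) ` Z)"
    using Rshift_lift_graph[OF rk E_R] closed_rkhs_transposed_graph_Tshift[OF rk]
    by (simp add: Z_def)
  ultimately obtain C where C: "\<forall>a\<in>Z. norm (R a) \<le> C * norm a"
    using closed_graph_theorem[OF closed_rkhs_vanishing[OF rk, of \<beta>, folded Z_def]]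
      Rshift_lift_add[OF rk E_R] Rshift_lift_scaleR[OF rk E_R] unfolding Z_def by blast
  have "normH E (Rshift \<beta> f) \<le> C * normH E f" if f: "f \<in> Hzero E \<beta>" for f
  proof -
    obtain a where a: "a \<in> Z" "f = E a"
      using f by (auto simp: Hzero_def Hsp_def Z_def)
    then have "normH E (Rshift \<beta> f) = norm (R a)" and "normH E f = norm a"
      using E_R[of a] normH_eval[OF rk, of "R a"] normH_eval[OF rk, of a] by (simp_all add: Z_def)
    then show ?thesis using C a(1) by simp
  qed
  then show ?thesis by blast
qed

lemma Rshift_bounded_linearI:
  assumes rk: "rkhs E K" and into: "Rshift \<beta> ` Hzero E \<beta> \<subseteq> Hsp E"
  shows "Rshift_bounded_linear E \<beta>"
proof -
  have "centire f" if "f \<in> Hzero E \<beta>" for f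
    using Hsp_centire[OF rk] that by (simp add: Hzero_def)
  then show ?thesis
    unfolding Rshift_bounded_linear_def
    using into Rshift_bounded[OF rk into] Rshift_add Rshift_cscale by blast
qed

lemma regular_type_if_Rshift_bounded:
  assumes rk: "rkhs E K" and bound: "\<forall>f\<in>Hzero E \<beta>. normH E (Rshift \<beta> f) \<le> C * normH E f"
  shows "regular_type E \<beta>"
  unfolding regular_type_def
proof (intro exI[of _ "1 / max C 1"] conjI ballI)
  fix g assume "g \<in> Tdom E"
  then have "normH E (Rshift \<beta> (Tshift \<beta> g)) \<le> C * normH E (Tshift \<beta> g)"
    using bound Tshift_Tdom(1)[OF rk] by blast
  then have "normH E g \<le> C * normH E (Tshift \<beta> g)"
    using Tshift_Tdom(2)[OF rk \<open>g \<in> Tdom E\<close>] by simp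
  also have "\<dots> \<le> max C 1 * normH E (Tshift \<beta> g)"
    by (intro mult_right_mono) (auto simp: normH_def)
  finally show "1 / max C 1 * normH E g \<le> normH E (Tshift \<beta> g)"
    by (simp add: field_simps)
qed simp

theorem lemma2:
  fixes E :: "'h::complex_hilbert \<Rightarrow> complex \<Rightarrow> 'x::complex_hilbert"
    and K :: "complex \<Rightarrow> complex \<Rightarrow> 'x \<Rightarrow> 'x"
  assumes sep: "separable_space (euclidean :: 'x topology)"
    and rk: "rkhs E K"
    and nonzero: "Hsp E \<noteq> {\<lambda>z. 0}"
  shows "(Rshift \<beta> ` Hzero E \<beta> \<subseteq> Hsp E \<longleftrightarrow> Rshift \<beta> ` Hzero E \<beta> = Tdom E) \<and>
         (Rshift \<beta> ` Hzero E \<beta> \<subseteq> Hsp E \<longrightarrow>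
            Rshift_bounded_linear E \<beta> \<and>
            Tshift \<beta> ` Tdom E = Hzero E \<beta> \<and>
            regular_type E \<beta>)"
proof (intro conjI impI)
  show "Rshift \<beta> ` Hzero E \<beta> \<subseteq> Hsp E \<longleftrightarrow> Rshift \<beta> ` Hzero E \<beta> = Tdom E"
    using Rshift_image_eq_Tdom[OF rk] by (auto simp: Tdom_def)
  assume into: "Rshift \<beta> ` Hzero E \<beta> \<subseteq> Hsp E"
  show "Rshift_bounded_linear E \<beta>"
    using Rshift_bounded_linearI[OF rk into] .
  show "Tshift \<beta> ` Tdom E = Hzero E \<beta>"
    using Tshift_image_Tdom[OF rk into] .
  obtain C where "\<forall>f\<in>Hzero E \<beta>. normH E (Rshift \<beta> f) \<le> C * normH E f"
    using Rshift_bounded[OF rk into] ..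
  then show "regular_type E \<beta>"
    by (rule regular_type_if_Rshift_bounded[OF rk])
qed

end
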